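(* Let $\Phi$ be a finite crystallographic root system with Weyl group $W$ and let $\beta,\gamma\in\Phi^+$. Then $|W^{(++)}(\beta,\gamma)|=|W^{(--)}(\beta,\gamma)|$ and $|W^{(+-)}(\beta,\gamma)|=|W^{(-+)}(\beta,\gamma)|$. If moreover $\beta\ne\gamma$, then $|W^{(++)}(\beta,\gamma)|=(\operatorname{ord}(\beta,\gamma)-1)\cdot|W^{(+-)}(\beta,\gamma)|$ if $\langle\beta,\gamma\rangle\ge0$, and $|W^{(+-)}(\beta,\gamma)|=(\operatorname{ord}(\beta,\gamma)-1)\cdot|W^{(++)}(\beta,\gamma)|$ if $\langle\beta,\gamma\rangle\le0$. In particular, all four sets $W^{(++)},W^{(--)},W^{(+-)},W^{(-+)}$ have equal cardinality if and only if $\beta$ and $\gamma$ are orthogonal.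
   Context: $\Phi\subset V$ is a finite crystallographic root system in a Euclidean space with inner product $\langle\cdot,\cdot\rangle$, positive roots $\Phi^+$, negative roots $\Phi^-=-\Phi^+$. For signs $\varepsilon,\delta\in\{+,-\}$, $W^{(\varepsilon\delta)}(\beta,\gamma)=\{w\in W : \varepsilon\cdot w(\beta)\in\Phi^+,\ \delta\cdot w(\gamma)\in\Phi^+\}$. $\operatorname{ord}(\beta,\gamma)=\min\{k>0:(s_\beta s_\gamma)^k=e\}$ where $s_\beta$ is the reflection in $\beta$. *)

theory Defs
  imports "HOL-Analysis.Analysis"
begin

definition refl :: "'a::euclidean_space \<Rightarrow> 'a \<Rightarrow> 'a" where
  "refl \<alpha> x = x - ((2 * (x \<bullet> \<alpha>)) / (\<alpha> \<bullet> \<alpha>)) *\<^sub>R \<alpha>"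

definition root_system :: "'a::euclidean_space set \<Rightarrow> bool" where
  "root_system \<Phi> \<longleftrightarrow>
     finite \<Phi> \<and> 0 \<notin> \<Phi> \<and>
     (\<forall>\<alpha>\<in>\<Phi>. refl \<alpha> ` \<Phi> = \<Phi>) \<and>
     (\<forall>\<alpha>\<in>\<Phi>. \<forall>\<beta>\<in>\<Phi>. 2 * (\<beta> \<bullet> \<alpha>) / (\<alpha> \<bullet> \<alpha>) \<in> \<int>) \<and>
     (\<forall>\<alpha>\<in>\<Phi>. \<forall>c::real. c *\<^sub>R \<alpha> \<in> \<Phi> \<longrightarrow> c = 1 \<or> c = -1)"

definition positive_system :: "'a::euclidean_space set \<Rightarrow> 'a set \<Rightarrow> bool" where
  "positive_system \<Phi> P \<longleftrightarrow>
     (\<exists>v. (\<forall>\<alpha>\<in>\<Phi>. \<alpha> \<bullet> v \<noteq> 0) \<and> P = {\<alpha>\<in>\<Phi>. \<alpha> \<bullet> v > 0})"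

inductive_set weyl_group :: "'a::euclidean_space set \<Rightarrow> ('a \<Rightarrow> 'a) set"
  for \<Phi> :: "'a set" where
  weyl_id: "id \<in> weyl_group \<Phi>"
| weyl_step: "\<alpha> \<in> \<Phi> \<Longrightarrow> w \<in> weyl_group \<Phi> \<Longrightarrow> refl \<alpha> \<circ> w \<in> weyl_group \<Phi>"

text \<open>W^(\<epsilon>\<delta>)(\<beta>,\<gamma>); signs encoded as booleans (True = +).\<close>
definition Wsgn :: "'a::euclidean_space set \<Rightarrow> 'a set \<Rightarrow> bool \<Rightarrow> bool \<Rightarrow> 'a \<Rightarrow> 'a \<Rightarrow> ('a \<Rightarrow> 'a) set" where
  "Wsgn \<Phi> P \<epsilon> \<delta> \<beta> \<gamma> =
     {w \<in> weyl_group \<Phi>. (if \<epsilon> then w \<beta> else - w \<beta>) \<in> P \<and> (if \<delta> then w \<gamma> else - w \<gamma>) \<in> P}"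

definition ord_refl :: "'a::euclidean_space \<Rightarrow> 'a \<Rightarrow> nat" where
  "ord_refl \<beta> \<gamma> = (LEAST k. k > 0 \<and> (refl \<beta> \<circ> refl \<gamma>) ^^ k = id)"

end

theory Submission
  imports Defs
begin

text \<open>Let \<open>D\<close> be the dihedral group generated by \<open>s\<^sub>\<beta>\<close> and \<open>s\<^sub>\<gamma>\<close>, of order \<open>2 m\<close> with
  \<open>m = ord(\<beta>, \<gamma>)\<close>. Counting the pairs \<open>(w, u) \<in> W \<times> D\<close> with \<open>w u \<in> W\<^sup>(\<^sup>\<epsilon>\<^sup>\<delta>\<^sup>)\<close> in two ways gives
  \<open>2 m |W\<^sup>(\<^sup>\<epsilon>\<^sup>\<delta>\<^sup>)| = |W| k\<close>, where \<open>k\<close> is the number of \<open>u \<in> D\<close> for which \<open>\<epsilon> w u(\<beta>)\<close> and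
  \<open>\<delta> w u(\<gamma>)\<close> are positive. This is a sign count in the rank two root system spanned by \<open>\<beta>\<close>
  and \<open>\<gamma>\<close> for the linear form \<open>x \<mapsto> \<langle>w x, v\<rangle>\<close>, and it does not depend on \<open>w\<close>: \<open>k = m - 1\<close> for
  the two sign patterns \<open>\<epsilon> \<delta> = sgn \<langle>\<beta>, \<gamma>\<rangle>\<close> and \<open>k = 1\<close> otherwise (\<open>k = 1\<close> and \<open>m = 2\<close> when
  \<open>\<beta> \<bottom> \<gamma>\<close>). For \<open>\<beta> \<noteq> \<plusminus>\<gamma>\<close> the Cartan integers \<open>\<langle>\<beta>, \<gamma>\<^sup>\<or>\<rangle>, \<langle>\<gamma>, \<beta>\<^sup>\<or>\<rangle>\<close> have the same sign and
  product at most 3, so there are eleven cases, in each of which \<open>m\<close> and \<open>k\<close> are computed from the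
  action of \<open>s\<^sub>\<beta>\<close> and \<open>s\<^sub>\<gamma>\<close> on coordinates with respect to \<open>\<beta>, \<gamma>\<close>. The case \<open>\<beta> = \<gamma>\<close> is
  immediate: right multiplication by \<open>s\<^sub>\<beta>\<close> exchanges \<open>W\<^sup>(\<^sup>+\<^sup>+\<^sup>)\<close> and \<open>W\<^sup>(\<^sup>-\<^sup>-\<^sup>)\<close>.\<close>

lemma refl_linear: "linear (refl a)"
  unfolding refl_def
  by (intro linearI) (auto simp: inner_add_left algebra_simps add_divide_distrib scaleR_add_left)

lemma inner_refl: "a \<noteq> 0 \<Longrightarrow> refl a x \<bullet> refl a y = x \<bullet> y"
  unfolding refl_def
  by (simp add: inner_diff_left inner_diff_right inner_commute field_simps power2_eq_square)

lemma refl_refl: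
  assumes "a \<noteq> 0"
  shows "refl a (refl a x) = x"
proof -
  define t where "t = 2 * (x \<bullet> a) / (a \<bullet> a)"
  have "(x - t *\<^sub>R a) \<bullet> a = - (x \<bullet> a)"
    using assms by (simp add: inner_diff_left t_def field_simps)
  then have "refl a (x - t *\<^sub>R a) = x - t *\<^sub>R a + t *\<^sub>R a"
    unfolding refl_def by (simp add: t_def)
  then show ?thesis
    by (simp add: refl_def t_def)
qed

definition cartan :: "'a::euclidean_space \<Rightarrow> 'a \<Rightarrow> real" where
  "cartan \<beta> \<gamma> = 2 * (\<beta> \<bullet> \<gamma>) / (\<gamma> \<bullet> \<gamma>)"

lemma refl_lincomb:
  assumes "a \<noteq> 0"
  shows "refl a (p *\<^sub>R a + q *\<^sub>R b) = (- p - cartan b a * q) *\<^sub>R a + q *\<^sub>R b"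
proof -
  have t: "2 * ((p *\<^sub>R a + q *\<^sub>R b) \<bullet> a) / (a \<bullet> a) = 2 * p + cartan b a * q"
    using assms by (simp add: cartan_def inner_add_left field_simps)
  have "refl a (p *\<^sub>R a + q *\<^sub>R b) = (p *\<^sub>R a + q *\<^sub>R b) - (2 * p + cartan b a * q) *\<^sub>R a"
    unfolding refl_def t ..
  also have "\<dots> = (- p - cartan b a * q) *\<^sub>R a + q *\<^sub>R b"
    by (simp add: algebra_simps) (metis mult_2_right scaleR_add_left)
  finally show ?thesis .
qed

lemma refl_self: "a \<noteq> 0 \<Longrightarrow> refl a a = - a"
  using refl_lincomb[of a 1 0] by simp

lemma
  assumes "root_system \<Phi>"
  shows root_system_finite: "finite \<Phi>"
    and root_system_zero: "0 \<notin> \<Phi>"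
    and root_system_refl_image: "\<alpha> \<in> \<Phi> \<Longrightarrow> refl \<alpha> ` \<Phi> = \<Phi>"
    and root_system_cartan_Ints: "\<alpha> \<in> \<Phi> \<Longrightarrow> \<beta> \<in> \<Phi> \<Longrightarrow> cartan \<beta> \<alpha> \<in> \<int>"
    and root_system_reduced: "\<alpha> \<in> \<Phi> \<Longrightarrow> c *\<^sub>R \<alpha> \<in> \<Phi> \<Longrightarrow> c = 1 \<or> c = -1"
  using assms unfolding root_system_def cartan_def by blast+

lemma root_system_uminus:
  assumes "root_system \<Phi>" and "\<alpha> \<in> \<Phi>"
  shows "- \<alpha> \<in> \<Phi>"
proof -
  have "\<alpha> \<noteq> 0"
    using assms root_system_zero by blast
  then have "- \<alpha> = refl \<alpha> \<alpha>"
    by (simp add: refl_self)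
  also have "\<dots> \<in> refl \<alpha> ` \<Phi>"
    using assms(2) by (rule imageI)
  finally show ?thesis
    using root_system_refl_image[OF assms] by simp
qed

lemma weyl_group_comp:
  "w \<in> weyl_group S \<Longrightarrow> w' \<in> weyl_group S \<Longrightarrow> w \<circ> w' \<in> weyl_group S"
  by (induction w rule: weyl_group.induct) (auto simp: comp_assoc intro: weyl_group.intros)

lemma refl_in_weyl_group: "\<alpha> \<in> S \<Longrightarrow> refl \<alpha> \<in> weyl_group S"
  using weyl_group.weyl_step[OF _ weyl_group.weyl_id] by fastforce

lemma linear_weyl_group: "w \<in> weyl_group S \<Longrightarrow> linear w"
proof (induction w rule: weyl_group.induct)
  case weyl_id
  show ?case
    by (rule linear_id)
next
  case (weyl_step \<alpha> w)
  then show ?case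
    using linear_compose[OF _ refl_linear] by blast
qed

lemma inner_weyl_group:
  assumes "0 \<notin> S" and "w \<in> weyl_group S"
  shows "w x \<bullet> w y = x \<bullet> y"
  using assms(2)
proof (induction w arbitrary: x y rule: weyl_group.induct)
  case weyl_id
  show ?case
    by simp
next
  case (weyl_step \<alpha> w)
  then have "\<alpha> \<noteq> 0"
    using assms(1) by blast
  then show ?case
    using weyl_step by (simp add: inner_refl)
qed

lemma weyl_group_inverse:
  assumes "0 \<notin> S" and "w \<in> weyl_group S"
  shows "\<exists>w' \<in> weyl_group S. w' \<circ> w = id \<and> w \<circ> w' = id"
  using assms(2)
proof (induction w rule: weyl_group.induct)
  case weyl_id
  show ?case
    by (intro bexI[of _ id] weyl_group.weyl_id) simp
next
  case (weyl_step \<alpha> w)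
  then obtain w' where w': "w' \<in> weyl_group S" "w' \<circ> w = id" "w \<circ> w' = id"
    by blast
  have "\<alpha> \<noteq> 0"
    using assms(1) weyl_step(1) by blast
  then have "refl \<alpha> \<circ> refl \<alpha> = id"
    by (simp add: fun_eq_iff refl_refl)
  then have "(w' \<circ> refl \<alpha>) \<circ> (refl \<alpha> \<circ> w) = id" and "(refl \<alpha> \<circ> w) \<circ> (w' \<circ> refl \<alpha>) = id"
    using w' by (metis comp_assoc comp_id)+
  moreover have "w' \<circ> refl \<alpha> \<in> weyl_group S"
    using w'(1) weyl_step(1) by (intro weyl_group_comp refl_in_weyl_group)
  ultimately show ?case
    by blast
qed

lemma weyl_group_minus_in_span: "w \<in> weyl_group S \<Longrightarrow> w x - x \<in> span S"
proof (induction w rule: weyl_group.induct)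
  case weyl_id
  then show ?case
    by (simp add: span_zero)
next
  case (weyl_step \<alpha> w)
  have "(2 * (w x \<bullet> \<alpha>) / (\<alpha> \<bullet> \<alpha>)) *\<^sub>R \<alpha> \<in> span S"
    using weyl_step(1) by (simp add: span_base span_scale)
  with weyl_step(3) have "(w x - x) - (2 * (w x \<bullet> \<alpha>) / (\<alpha> \<bullet> \<alpha>)) *\<^sub>R \<alpha> \<in> span S"
    by (rule span_diff)
  then show ?case
    by (simp add: refl_def algebra_simps)
qed

text \<open>An element of the group generated by the reflections in \<open>S\<close> moves vectors only inside
  \<open>span S\<close> and is orthogonal, so if it fixes \<open>S\<close> pointwise it is the identity.\<close>

lemma weyl_group_eq_id:
  assumes "0 \<notin> S" and w: "w \<in> weyl_group S" and fix_S: "\<And>\<alpha>. \<alpha> \<in> S \<Longrightarrow> w \<alpha> = \<alpha>"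
  shows "w = id"
proof
  fix x
  have "orthogonal (w x - x) \<alpha>" if "\<alpha> \<in> S" for \<alpha>
    using inner_weyl_group[OF assms(1) w, of x \<alpha>] fix_S[OF that]
    by (simp add: orthogonal_def inner_diff_left)
  then have "orthogonal (w x - x) (w x - x)"
    by (rule orthogonal_to_span[OF weyl_group_minus_in_span[OF w]])
  then show "w x = id x"
    by (simp add: orthogonal_def)
qed

lemma weyl_group_eqI:
  assumes "0 \<notin> S" and w1: "w1 \<in> weyl_group S" and w2: "w2 \<in> weyl_group S"
    and agree: "\<And>\<alpha>. \<alpha> \<in> S \<Longrightarrow> w1 \<alpha> = w2 \<alpha>"
  shows "w1 = w2"
proof -
  obtain w2' where w2': "w2' \<in> weyl_group S" "w2' \<circ> w2 = id" "w2 \<circ> w2' = id"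
    using weyl_group_inverse[OF assms(1) w2] by blast
  have "w2' \<circ> w1 = id"
  proof (rule weyl_group_eq_id[OF assms(1) weyl_group_comp[OF w2'(1) w1]])
    show "(w2' \<circ> w1) \<alpha> = \<alpha>" if "\<alpha> \<in> S" for \<alpha>
      using agree[OF that] w2'(2) by (simp add: fun_eq_iff)
  qed
  then have "w2 \<circ> (w2' \<circ> w1) = w2"
    by simp
  then show ?thesis
    using w2'(3) by (simp add: comp_assoc[symmetric])
qed

lemma weyl_group_image:
  assumes "root_system \<Phi>" and "w \<in> weyl_group \<Phi>"
  shows "w ` \<Phi> = \<Phi>"
  using assms(2)
proof (induction w rule: weyl_group.induct)
  case weyl_id
  show ?case
    by simp
next
  case (weyl_step \<alpha> w)
  have "(refl \<alpha> \<circ> w) ` \<Phi> = refl \<alpha> ` (w ` \<Phi>)"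
    by (rule image_comp[symmetric])
  then show ?case
    using weyl_step root_system_refl_image[OF assms(1)] by simp
qed

lemma finite_weyl_group:
  assumes "root_system \<Phi>"
  shows "finite (weyl_group \<Phi>)"
proof (rule inj_on_finite)
  show "inj_on (\<lambda>w. restrict w \<Phi>) (weyl_group \<Phi>)"
    using weyl_group_eqI[OF root_system_zero[OF assms]] by (intro inj_onI) (metis restrict_apply')
  show "(\<lambda>w. restrict w \<Phi>) ` weyl_group \<Phi> \<subseteq> \<Phi> \<rightarrow>\<^sub>E \<Phi>"
    using weyl_group_image[OF assms] by (auto simp: PiE_iff image_subset_iff)
  show "finite (\<Phi> \<rightarrow>\<^sub>E \<Phi>)"
    using root_system_finite[OF assms] by (simp add: finite_PiE)
qed

section \<open>Double counting\<close>

lemma card_right_translate: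
  assumes inv: "u' \<circ> u = id" "u \<circ> u' = id"
    and closed: "\<And>w. w \<in> W \<Longrightarrow> w \<circ> u' \<in> W" and "S \<subseteq> W"
  shows "card {w \<in> W. w \<circ> u \<in> S} = card S"
proof -
  have "{w \<in> W. w \<circ> u \<in> S} = (\<lambda>s. s \<circ> u') ` S"
  proof (intro equalityI subsetI)
    fix w assume "w \<in> {w \<in> W. w \<circ> u \<in> S}"
    moreover have "w = (w \<circ> u) \<circ> u'"
      using inv(2) by (simp add: comp_assoc)
    ultimately show "w \<in> (\<lambda>s. s \<circ> u') ` S"
      by blast
  next
    fix w assume "w \<in> (\<lambda>s. s \<circ> u') ` S"
    then obtain s where "s \<in> S" "w = s \<circ> u'"
      by blast
    moreover have "s \<circ> u' \<circ> u = s"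
      using inv(1) by (simp add: comp_assoc)
    ultimately show "w \<in> {w \<in> W. w \<circ> u \<in> S}"
      using closed assms(4) by auto
  qed
  moreover have "inj_on (\<lambda>s. s \<circ> u') S"
    using inv(1) by (intro inj_onI) (metis comp_assoc comp_id)
  ultimately show ?thesis
    by (simp add: card_image)
qed

text \<open>Double counting of the pairs \<open>(w, u)\<close> with \<open>w \<circ> u \<in> S\<close>, using that every right translate
  of \<open>S\<close> has the size of \<open>S\<close>.\<close>

lemma sum_length_filter_translates:
  assumes "finite W" and "set us \<subseteq> W" and "S \<subseteq> W"
    and comp: "\<And>u w. u \<in> W \<Longrightarrow> w \<in> W \<Longrightarrow> w \<circ> u \<in> W"
    and inverse: "\<And>u. u \<in> W \<Longrightarrow> \<exists>u' \<in> W. u' \<circ> u = id \<and> u \<circ> u' = id"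
  shows "(\<Sum>w\<in>W. length (filter (\<lambda>u. w \<circ> u \<in> S) us)) = length us * card S"
  using assms(2)
proof (induction us)
  case Nil
  then show ?case
    by simp
next
  case (Cons u us)
  obtain u' where u': "u' \<in> W" "u' \<circ> u = id" "u \<circ> u' = id"
    using inverse Cons.prems by auto
  have "(\<Sum>w\<in>W. length (filter (\<lambda>u. w \<circ> u \<in> S) (u # us)))
      = (\<Sum>w\<in>W. of_bool (w \<circ> u \<in> S) + length (filter (\<lambda>u. w \<circ> u \<in> S) us))"
    by (rule sum.cong) auto
  also have "\<dots> = (\<Sum>w\<in>W. of_bool (w \<circ> u \<in> S)) + (\<Sum>w\<in>W. length (filter (\<lambda>u. w \<circ> u \<in> S) us))"
    by (rule sum.distrib)
  also have "(\<Sum>w\<in>W. of_bool (w \<circ> u \<in> S)) = card {w \<in> W. w \<circ> u \<in> S}"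
    using assms(1) by (simp add: Int_def)
  also have "\<dots> = card S"
    using u' comp assms(3) by (intro card_right_translate) blast+
  finally show ?case
    using Cons by simp
qed

definition lincomb2 :: "'a::real_vector \<Rightarrow> 'a \<Rightarrow> real \<times> real \<Rightarrow> 'a" where
  "lincomb2 \<beta> \<gamma> pq = fst pq *\<^sub>R \<beta> + snd pq *\<^sub>R \<gamma>"

lemma lincomb2_simps [simp]: "lincomb2 \<beta> \<gamma> (1, 0) = \<beta>" "lincomb2 \<beta> \<gamma> (0, 1) = \<gamma>" "lincomb2 \<beta> \<gamma> (0, 0) = 0"
  by (simp_all add: lincomb2_def)

lemma linear_lincomb2: "linear f \<Longrightarrow> f (lincomb2 \<beta> \<gamma> pq) = lincomb2 (f \<beta>) (f \<gamma>) pq"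
  by (simp add: lincomb2_def linear_add linear_scale)

text \<open>A list of booleans stands for a product of reflections, \<open>True\<close> for \<open>s\<^sub>\<beta>\<close> and \<open>False\<close> for
  \<open>s\<^sub>\<gamma>\<close>. With \<open>a = cartan \<beta> \<gamma>\<close> and \<open>b = cartan \<gamma> \<beta>\<close>, \<open>coeff_word a b\<close> is its action on the
  coordinates \<open>(p, q)\<close> of \<open>p \<beta> + q \<gamma>\<close>.\<close>

primrec refl_word :: "'a::euclidean_space \<Rightarrow> 'a \<Rightarrow> bool list \<Rightarrow> 'a \<Rightarrow> 'a" where
  "refl_word \<beta> \<gamma> [] = id"
| "refl_word \<beta> \<gamma> (t # ws) = (if t then refl \<beta> else refl \<gamma>) \<circ> refl_word \<beta> \<gamma> ws"

primrec coeff_word :: "real \<Rightarrow> real \<Rightarrow> bool list \<Rightarrow> real \<times> real \<Rightarrow> real \<times> real" where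
  "coeff_word a b [] pq = pq"
| "coeff_word a b (t # ws) pq = (case coeff_word a b ws pq of (p, q) \<Rightarrow>
     if t then (- p - b * q, q) else (p, - q - a * p))"

lemma refl_word_in_weyl_group: "\<beta> \<in> S \<Longrightarrow> \<gamma> \<in> S \<Longrightarrow> refl_word \<beta> \<gamma> ws \<in> weyl_group S"
  by (induction ws) (auto intro: weyl_group.intros)

lemma refl_word_lincomb2:
  assumes "\<beta> \<noteq> 0" and "\<gamma> \<noteq> 0"
  shows "refl_word \<beta> \<gamma> ws (lincomb2 \<beta> \<gamma> pq)
    = lincomb2 \<beta> \<gamma> (coeff_word (cartan \<beta> \<gamma>) (cartan \<gamma> \<beta>) ws pq)"
proof (induction ws)
  case Nil
  show ?case
    by simp
next
  case (Cons t ws)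
  obtain p q where pq: "coeff_word (cartan \<beta> \<gamma>) (cartan \<gamma> \<beta>) ws pq = (p, q)"
    by fastforce
  have "refl \<gamma> (p *\<^sub>R \<beta> + q *\<^sub>R \<gamma>) = p *\<^sub>R \<beta> + (- q - cartan \<beta> \<gamma> * p) *\<^sub>R \<gamma>"
    using refl_lincomb[OF assms(2), of q p \<beta>] by (simp add: add.commute)
  then show ?case
    using Cons pq refl_lincomb[OF assms(1), of p q \<gamma>] by (simp add: lincomb2_def)
qed

definition rotation_word :: "nat \<Rightarrow> bool list" where
  "rotation_word k = concat (replicate k [True, False])"

lemma funpow_refl_comp: "(refl \<beta> \<circ> refl \<gamma>) ^^ k = refl_word \<beta> \<gamma> (rotation_word k)"
  by (induction k) (simp_all add: rotation_word_def comp_assoc)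

definition rotation_order :: "nat \<Rightarrow> real \<Rightarrow> real \<Rightarrow> bool" where
  "rotation_order m a b \<longleftrightarrow>
     coeff_word a b (rotation_word m) (1, 0) = (1, 0) \<and> coeff_word a b (rotation_word m) (0, 1) = (0, 1) \<and>
     (\<forall>k \<in> {1..<m}. coeff_word a b (rotation_word k) (1, 0) \<noteq> (1, 0))"

lemma ord_refl_eqI:
  assumes indep: "inj (lincomb2 \<beta> \<gamma>)" and "0 < m"
    and order: "rotation_order m (cartan \<beta> \<gamma>) (cartan \<gamma> \<beta>)"
  shows "ord_refl \<beta> \<gamma> = m"
proof -
  let ?r = "refl \<beta> \<circ> refl \<gamma>" and ?c = "coeff_word (cartan \<beta> \<gamma>) (cartan \<gamma> \<beta>)"
  have nonzero: "0 \<notin> {\<beta>, \<gamma>}"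
    using inj_eq[OF indep, of "(1, 0)" "(0, 0)"] inj_eq[OF indep, of "(0, 1)" "(0, 0)"] by auto
  then have rotate: "(?r ^^ k) (lincomb2 \<beta> \<gamma> pq) = lincomb2 \<beta> \<gamma> (?c (rotation_word k) pq)" for k pq
    by (simp add: funpow_refl_comp refl_word_lincomb2)
  have "?r ^^ m = id"
  proof (rule weyl_group_eq_id[OF nonzero])
    show "?r ^^ m \<in> weyl_group {\<beta>, \<gamma>}"
      unfolding funpow_refl_comp by (simp add: refl_word_in_weyl_group)
    show "(?r ^^ m) \<alpha> = \<alpha>" if "\<alpha> \<in> {\<beta>, \<gamma>}" for \<alpha>
      using that order rotate[of m "(1, 0)"] rotate[of m "(0, 1)"]
      by (auto simp: rotation_order_def)
  qed
  moreover have "?r ^^ k \<noteq> id" if "0 < k" "k < m" for k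
  proof
    assume "?r ^^ k = id"
    then have "lincomb2 \<beta> \<gamma> (?c (rotation_word k) (1, 0)) = lincomb2 \<beta> \<gamma> (1, 0)"
      using rotate[of k "(1, 0)"] by simp
    then have "?c (rotation_word k) (1, 0) = (1, 0)"
      by (rule injD[OF indep])
    with order that show False
      by (simp add: rotation_order_def)
  qed
  ultimately show ?thesis
    unfolding ord_refl_def using \<open>0 < m\<close> by (intro Least_equality) (auto simp: not_less[symmetric])
qed

section \<open>Sign counts over the dihedral group\<close>

fun alternating_word :: "bool \<Rightarrow> nat \<Rightarrow> bool list" where
  "alternating_word t 0 = []"
| "alternating_word t (Suc n) = t # alternating_word (\<not> t) n"

text \<open>The \<open>2 m\<close> elements of the dihedral group of order \<open>2 m\<close> generated by \<open>s\<^sub>\<beta>\<close> and \<open>s\<^sub>\<gamma>\<close>.\<close>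

definition dihedral_words :: "nat \<Rightarrow> bool list list" where
  "dihedral_words m = map (alternating_word True) [0..<m] @ map (alternating_word False) [1..<Suc m]"

lemma length_dihedral_words: "length (dihedral_words m) = 2 * m"
  by (simp add: dihedral_words_def)

definition coeff_value :: "real \<Rightarrow> real \<Rightarrow> real \<times> real \<Rightarrow> real" where
  "coeff_value A B pq = fst pq * A + snd pq * B"

lemma inner_lincomb2: "lincomb2 \<beta> \<gamma> pq \<bullet> v = coeff_value (\<beta> \<bullet> v) (\<gamma> \<bullet> v) pq"
  by (simp add: lincomb2_def coeff_value_def inner_add_left)

definition sign_count :: "nat \<Rightarrow> real \<Rightarrow> real \<Rightarrow> real \<Rightarrow> real \<Rightarrow> bool \<Rightarrow> bool \<Rightarrow> nat" where
  "sign_count m a b A B e f = length [ws \<leftarrow> dihedral_words m.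
     (0 < coeff_value A B (coeff_word a b ws (1, 0))) = e \<and> (0 < coeff_value A B (coeff_word a b ws (0, 1))) = f]"

definition expected_count :: "nat \<Rightarrow> real \<Rightarrow> bool \<Rightarrow> bool \<Rightarrow> nat" where
  "expected_count m t e f = (if t \<noteq> 0 \<and> (e = f) = (0 < t) then m - 1 else 1)"

lemma expected_count_sgn_cong: "sgn s = sgn t \<Longrightarrow> expected_count m s = expected_count m t"
  by (auto simp: fun_eq_iff expected_count_def sgn_if split: if_splits)

text \<open>\<open>A\<close> and \<open>B\<close> are the values of a linear form at \<open>\<beta>\<close> and \<open>\<gamma>\<close>; the form must not vanish on
  the images of \<open>\<beta>\<close> and \<open>\<gamma>\<close> under the dihedral group.\<close>

definition sign_counts_regular :: "nat \<Rightarrow> real \<Rightarrow> real \<Rightarrow> bool" where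
  "sign_counts_regular m a b \<longleftrightarrow> (\<forall>A B.
     (\<forall>ws \<in> set (dihedral_words m). coeff_value A B (coeff_word a b ws (1, 0)) \<noteq> 0
                                    \<and> coeff_value A B (coeff_word a b ws (0, 1)) \<noteq> 0)
     \<longrightarrow> (\<forall>e f. sign_count m a b A B e f = expected_count m a e f))"

lemma signed_root_in_positive_iff:
  assumes "root_system \<Phi>" and P: "P = {\<alpha> \<in> \<Phi>. 0 < \<alpha> \<bullet> v}" and "\<forall>\<alpha> \<in> \<Phi>. \<alpha> \<bullet> v \<noteq> 0"
    and "x \<in> \<Phi>"
  shows "(if e then x else - x) \<in> P \<longleftrightarrow> (0 < x \<bullet> v) = e"
  using assms root_system_uminus[OF assms(1,4)] by (cases e) auto

lemma length_filter_dihedral_translates: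
  assumes \<Phi>: "root_system \<Phi>" and P: "P = {\<alpha> \<in> \<Phi>. 0 < \<alpha> \<bullet> v}" and regular: "\<forall>\<alpha> \<in> \<Phi>. \<alpha> \<bullet> v \<noteq> 0"
    and \<beta>: "\<beta> \<in> \<Phi>" and \<gamma>: "\<gamma> \<in> \<Phi>" and w: "w \<in> weyl_group \<Phi>"
    and counts: "sign_counts_regular m (cartan \<beta> \<gamma>) (cartan \<gamma> \<beta>)"
  shows "length (filter (\<lambda>u. w \<circ> u \<in> Wsgn \<Phi> P e f \<beta> \<gamma>) (map (refl_word \<beta> \<gamma>) (dihedral_words m)))
    = expected_count m (cartan \<beta> \<gamma>) e f"
proof -
  let ?c = "coeff_word (cartan \<beta> \<gamma>) (cartan \<gamma> \<beta>)"
  define A B where "A = w \<beta> \<bullet> v" and "B = w \<gamma> \<bullet> v"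
  have nonzero: "\<beta> \<noteq> 0" "\<gamma> \<noteq> 0"
    using \<beta> \<gamma> root_system_zero[OF \<Phi>] by auto
  have in_weyl_group: "w \<circ> refl_word \<beta> \<gamma> ws \<in> weyl_group \<Phi>" for ws
    using weyl_group_comp[OF w refl_word_in_weyl_group[OF \<beta> \<gamma>]] .
  have evaluation: "(w \<circ> refl_word \<beta> \<gamma> ws) (lincomb2 \<beta> \<gamma> pq) \<bullet> v = coeff_value A B (?c ws pq)" for ws pq
    using refl_word_lincomb2[OF nonzero] linear_lincomb2[OF linear_weyl_group[OF w]]
    by (simp add: inner_lincomb2 A_def B_def)
  have in_roots: "(w \<circ> refl_word \<beta> \<gamma> ws) x \<in> \<Phi>" if "x \<in> \<Phi>" for ws x
    using weyl_group_image[OF \<Phi> in_weyl_group] that by blast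
  have "w \<circ> refl_word \<beta> \<gamma> ws \<in> Wsgn \<Phi> P e f \<beta> \<gamma>
      \<longleftrightarrow> (0 < coeff_value A B (?c ws (1, 0))) = e \<and> (0 < coeff_value A B (?c ws (0, 1))) = f" for ws
    using evaluation[of ws "(1, 0)"] evaluation[of ws "(0, 1)"] \<beta> \<gamma> in_weyl_group
      signed_root_in_positive_iff[OF \<Phi> P regular in_roots]
    by (simp add: Wsgn_def)
  then have "length (filter (\<lambda>u. w \<circ> u \<in> Wsgn \<Phi> P e f \<beta> \<gamma>) (map (refl_word \<beta> \<gamma>) (dihedral_words m)))
      = sign_count m (cartan \<beta> \<gamma>) (cartan \<gamma> \<beta>) A B e f"
    by (simp add: sign_count_def filter_map comp_def)
  also have "\<dots> = expected_count m (cartan \<beta> \<gamma>) e f"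
  proof -
    have "coeff_value A B (?c ws pq) \<noteq> 0" if "pq \<in> {(1, 0), (0, 1)}" for ws pq
      using evaluation[of ws pq] in_roots[of "lincomb2 \<beta> \<gamma> pq" ws] regular that \<beta> \<gamma> by auto
    then show ?thesis
      using counts by (simp add: sign_counts_regular_def)
  qed
  finally show ?thesis .
qed

lemma card_Wsgn_eq_expected_count:
  assumes \<Phi>: "root_system \<Phi>" and P: "P = {\<alpha> \<in> \<Phi>. 0 < \<alpha> \<bullet> v}" and regular: "\<forall>\<alpha> \<in> \<Phi>. \<alpha> \<bullet> v \<noteq> 0"
    and \<beta>: "\<beta> \<in> \<Phi>" and \<gamma>: "\<gamma> \<in> \<Phi>"
    and counts: "sign_counts_regular m (cartan \<beta> \<gamma>) (cartan \<gamma> \<beta>)"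
  shows "2 * m * card (Wsgn \<Phi> P e f \<beta> \<gamma>) = card (weyl_group \<Phi>) * expected_count m (cartan \<beta> \<gamma>) e f"
proof -
  let ?W = "weyl_group \<Phi>" and ?S = "Wsgn \<Phi> P e f \<beta> \<gamma>"
  let ?us = "map (refl_word \<beta> \<gamma>) (dihedral_words m)"
  have "card ?W * expected_count m (cartan \<beta> \<gamma>) e f = (\<Sum>w\<in>?W. length (filter (\<lambda>u. w \<circ> u \<in> ?S) ?us))"
    using length_filter_dihedral_translates[OF \<Phi> P regular \<beta> \<gamma> _ counts] by simp
  also have "\<dots> = length ?us * card ?S"
  proof (rule sum_length_filter_translates)
    show "finite ?W"
      by (rule finite_weyl_group[OF \<Phi>])
    show "set ?us \<subseteq> ?W"
      using refl_word_in_weyl_group[OF \<beta> \<gamma>] by auto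
    show "?S \<subseteq> ?W"
      by (auto simp: Wsgn_def)
    show "w \<circ> u \<in> ?W" if "u \<in> ?W" "w \<in> ?W" for u w
      using that by (rule weyl_group_comp[rotated])
    show "\<exists>u' \<in> ?W. u' \<circ> u = id \<and> u \<circ> u' = id" if "u \<in> ?W" for u
      using weyl_group_inverse[OF root_system_zero[OF \<Phi>] that] .
  qed
  finally show ?thesis
    by (simp add: length_dihedral_words)
qed

lemma root_pair_independent:
  assumes \<Phi>: "root_system \<Phi>" and \<beta>: "\<beta> \<in> \<Phi>" and \<gamma>: "\<gamma> \<in> \<Phi>" and "\<beta> \<noteq> \<gamma>" and "\<beta> \<noteq> - \<gamma>"
    and combination: "p *\<^sub>R \<beta> + q *\<^sub>R \<gamma> = 0"
  shows "p = 0 \<and> q = 0"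
proof -
  have "q = 0"
  proof (rule ccontr)
    assume "q \<noteq> 0"
    define c where "c = - p / q"
    have "q *\<^sub>R \<gamma> = - (p *\<^sub>R \<beta>)"
      using combination by (simp add: eq_neg_iff_add_eq_0 add.commute)
    then have "(1 / q) *\<^sub>R (q *\<^sub>R \<gamma>) = (1 / q) *\<^sub>R (- (p *\<^sub>R \<beta>))"
      by simp
    then have \<gamma>_eq: "\<gamma> = c *\<^sub>R \<beta>"
      using \<open>q \<noteq> 0\<close> by (simp add: c_def divide_inverse)
    then have "c = 1 \<or> c = -1"
      using root_system_reduced[OF \<Phi> \<beta>] \<gamma> by blast
    then show False
      using \<gamma>_eq assms(4,5) by auto
  qed
  moreover have "\<beta> \<noteq> 0"
    using \<beta> root_system_zero[OF \<Phi>] by auto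
  ultimately show ?thesis
    using combination by simp
qed

lemma inj_lincomb2_roots:
  assumes "root_system \<Phi>" and "\<beta> \<in> \<Phi>" and "\<gamma> \<in> \<Phi>" and "\<beta> \<noteq> \<gamma>" and "\<beta> \<noteq> - \<gamma>"
  shows "inj (lincomb2 \<beta> \<gamma>)"
proof (rule injI)
  fix pq pq' :: "real \<times> real"
  assume "lincomb2 \<beta> \<gamma> pq = lincomb2 \<beta> \<gamma> pq'"
  then have "(fst pq - fst pq') *\<^sub>R \<beta> + (snd pq - snd pq') *\<^sub>R \<gamma> = 0"
    by (simp add: lincomb2_def algebra_simps)
  then have "fst pq - fst pq' = 0 \<and> snd pq - snd pq' = 0"
    by (rule root_pair_independent[OF assms])
  then show "pq = pq'"
    by (simp add: prod_eq_iff)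
qed

lemma cartan_product_less_4:
  assumes indep: "inj (lincomb2 \<beta> \<gamma>)"
  shows "cartan \<beta> \<gamma> * cartan \<gamma> \<beta> < 4"
proof -
  have "\<beta> \<noteq> 0" and "\<gamma> \<noteq> 0"
    using inj_eq[OF indep, of "(1, 0)" "(0, 0)"] inj_eq[OF indep, of "(0, 1)" "(0, 0)"] by simp_all
  then have \<beta>\<beta>: "0 < \<beta> \<bullet> \<beta>" and \<gamma>\<gamma>: "0 < \<gamma> \<bullet> \<gamma>"
    by simp_all
  define t where "t = (\<beta> \<bullet> \<gamma>) / (\<beta> \<bullet> \<beta>)"
  have "\<gamma> - t *\<^sub>R \<beta> = lincomb2 \<beta> \<gamma> (- t, 1)"
    by (simp add: lincomb2_def)
  then have "\<gamma> - t *\<^sub>R \<beta> \<noteq> 0"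
    using inj_eq[OF indep, of "(- t, 1)" "(0, 0)"] by simp
  then have "0 < (\<gamma> - t *\<^sub>R \<beta>) \<bullet> (\<gamma> - t *\<^sub>R \<beta>)"
    by simp
  also have "\<dots> = \<gamma> \<bullet> \<gamma> - (\<beta> \<bullet> \<gamma>)\<^sup>2 / (\<beta> \<bullet> \<beta>)"
    using \<beta>\<beta> by (simp add: t_def inner_diff_left inner_diff_right inner_commute field_simps power2_eq_square)
  finally have "(\<beta> \<bullet> \<gamma>)\<^sup>2 < (\<beta> \<bullet> \<beta>) * (\<gamma> \<bullet> \<gamma>)"
    using \<beta>\<beta> by (simp add: field_simps)
  then show ?thesis
    using \<beta>\<beta> \<gamma>\<gamma> by (simp add: cartan_def inner_commute field_simps power2_eq_square)
qed

lemma sgn_cartan: "\<gamma> \<noteq> 0 \<Longrightarrow> sgn (cartan \<beta> \<gamma>) = sgn (\<beta> \<bullet> \<gamma>)"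
  by (simp add: cartan_def sgn_mult)

section \<open>The rank two cases\<close>

text \<open>Counting through an integer sum of unsplit conditionals keeps the simplifier from splitting
  on the signs; \<open>smt\<close> then decides the remaining linear sign constraints.\<close>

lemma length_filter_eq_iff_sum: "length (filter P xs) = k \<longleftrightarrow> (\<Sum>x \<leftarrow> xs. if P x then 1 else 0 :: int) = int k"
proof -
  have "int (length (filter P xs)) = (\<Sum>x \<leftarrow> xs. if P x then 1 else 0)"
    by (induction xs) auto
  then show ?thesis
    by linarith
qed

lemma rotation_order_table:
  "rotation_order 2 0 0"
  "rotation_order 3 1 1" "rotation_order 3 (-1) (-1)"
  "rotation_order 4 1 2" "rotation_order 4 (-1) (-2)" "rotation_order 4 2 1" "rotation_order 4 (-2) (-1)"
  "rotation_order 6 1 3" "rotation_order 6 (-1) (-3)" "rotation_order 6 3 1" "rotation_order 6 (-3) (-1)"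
  by (simp_all add: rotation_order_def rotation_word_def eval_nat_numeral atLeastLessThanSuc)

lemma sign_counts_table:
  "sign_counts_regular 2 0 0"
  "sign_counts_regular 3 1 1" "sign_counts_regular 3 (-1) (-1)"
  "sign_counts_regular 4 1 2" "sign_counts_regular 4 (-1) (-2)"
  "sign_counts_regular 4 2 1" "sign_counts_regular 4 (-2) (-1)"
  "sign_counts_regular 6 1 3" "sign_counts_regular 6 (-1) (-3)"
  "sign_counts_regular 6 3 1" "sign_counts_regular 6 (-3) (-1)"
  unfolding sign_counts_regular_def sign_count_def length_filter_eq_iff_sum all_bool_eq
  by (intro allI impI conjI; simp add: dihedral_words_def eval_nat_numeral upt_rec coeff_value_def
      expected_count_def split del: if_split; smt (verit))+

lemma cartan_pair_cases:
  fixes c d :: int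
  assumes "sgn c = sgn d" and "c * d < 4"
  shows "(c, d) \<in> {(0, 0), (1, 1), (-1, -1), (1, 2), (-1, -2), (2, 1), (-2, -1),
                    (1, 3), (-1, -3), (3, 1), (-3, -1)}"
proof -
  have product: "c * d = \<bar>c\<bar> * \<bar>d\<bar>"
    using assms(1) by (auto simp: sgn_if abs_if split: if_splits)
  have "\<bar>c\<bar> \<le> 3 \<and> \<bar>d\<bar> \<le> 3"
  proof (cases "c = 0")
    case True
    then show ?thesis
      using assms(1) by (simp add: sgn_0_0)
  next
    case False
    then have "d \<noteq> 0"
      using assms(1) by (auto simp: sgn_0_0)
    then have "\<bar>c\<bar> * 1 \<le> \<bar>c\<bar> * \<bar>d\<bar>"
      by (intro mult_left_mono) auto
    moreover have "1 * \<bar>d\<bar> \<le> \<bar>c\<bar> * \<bar>d\<bar>"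
      using False by (intro mult_right_mono) auto
    ultimately show ?thesis
      using product assms(2) by linarith
  qed
  then have "c \<in> {-3, -2, -1, 0, 1, 2, 3}" and "d \<in> {-3, -2, -1, 0, 1, 2, 3}"
    by auto
  then show ?thesis
    using assms by (simp add: sgn_if; elim disjE; simp)
qed

definition coxeter_order :: "int \<Rightarrow> nat" where
  "coxeter_order n = (if n = 0 then 2 else if n = 1 then 3 else if n = 2 then 4 else 6)"

lemma dihedral_tables:
  fixes c d :: int
  assumes "sgn c = sgn d" and "c * d < 4"
  shows "rotation_order (coxeter_order (c * d)) c d \<and> sign_counts_regular (coxeter_order (c * d)) c d"
  using cartan_pair_cases[OF assms] rotation_order_table sign_counts_table
  by (auto simp: coxeter_order_def)

lemma card_Wsgn_root_pair:
  assumes \<Phi>: "root_system \<Phi>" and P: "P = {\<alpha> \<in> \<Phi>. 0 < \<alpha> \<bullet> v}" and regular: "\<forall>\<alpha> \<in> \<Phi>. \<alpha> \<bullet> v \<noteq> 0"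
    and \<beta>: "\<beta> \<in> \<Phi>" and \<gamma>: "\<gamma> \<in> \<Phi>" and "\<beta> \<noteq> \<gamma>" and "\<beta> \<noteq> - \<gamma>"
  shows "2 \<le> ord_refl \<beta> \<gamma>" and "ord_refl \<beta> \<gamma> = 2 \<longleftrightarrow> \<beta> \<bullet> \<gamma> = 0"
    and "2 * ord_refl \<beta> \<gamma> * card (Wsgn \<Phi> P e f \<beta> \<gamma>)
           = card (weyl_group \<Phi>) * expected_count (ord_refl \<beta> \<gamma>) (\<beta> \<bullet> \<gamma>) e f"
proof -
  have indep: "inj (lincomb2 \<beta> \<gamma>)"
    using inj_lincomb2_roots assms by blast
  have nonzero: "\<beta> \<noteq> 0" "\<gamma> \<noteq> 0"
    using \<beta> \<gamma> root_system_zero[OF \<Phi>] by auto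
  obtain c d :: int where c: "cartan \<beta> \<gamma> = c" and d: "cartan \<gamma> \<beta> = d"
    using root_system_cartan_Ints[OF \<Phi>] \<beta> \<gamma> by (metis Ints_cases)
  have sgn_c: "sgn (real_of_int c) = sgn (\<beta> \<bullet> \<gamma>)"
    unfolding c[symmetric] by (rule sgn_cartan[OF nonzero(2)])
  have "sgn (real_of_int d) = sgn (\<beta> \<bullet> \<gamma>)"
    unfolding d[symmetric] inner_commute[of \<beta>] by (rule sgn_cartan[OF nonzero(1)])
  then have "sgn c = sgn d"
    using sgn_c by (auto simp: sgn_if split: if_splits)
  moreover have "c * d < 4"
    using cartan_product_less_4[OF indep] c d by (metis of_int_less_numeral_iff of_int_mult)
  ultimately have tables: "rotation_order (coxeter_order (c * d)) c d" "sign_counts_regular (coxeter_order (c * d)) c d"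
    using dihedral_tables by blast+
  have ord: "ord_refl \<beta> \<gamma> = coxeter_order (c * d)"
    using ord_refl_eqI[OF indep] tables(1) c d by (simp add: coxeter_order_def)
  show "2 \<le> ord_refl \<beta> \<gamma>"
    by (simp add: ord coxeter_order_def)
  have "c * d = 0 \<longleftrightarrow> \<beta> \<bullet> \<gamma> = 0"
    using \<open>sgn c = sgn d\<close> sgn_c by (auto simp: sgn_0_0)
  then show "ord_refl \<beta> \<gamma> = 2 \<longleftrightarrow> \<beta> \<bullet> \<gamma> = 0"
    by (simp add: ord coxeter_order_def)
  show "2 * ord_refl \<beta> \<gamma> * card (Wsgn \<Phi> P e f \<beta> \<gamma>)
      = card (weyl_group \<Phi>) * expected_count (ord_refl \<beta> \<gamma>) (\<beta> \<bullet> \<gamma>) e f"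
    using card_Wsgn_eq_expected_count[OF \<Phi> P regular \<beta> \<gamma>] tables(2) c d ord
      expected_count_sgn_cong[OF sgn_c] by simp
qed

lemma card_Wsgn_diagonal:
  assumes \<Phi>: "root_system \<Phi>" and \<beta>: "\<beta> \<in> \<Phi>"
  shows "card (Wsgn \<Phi> P False False \<beta> \<beta>) = card (Wsgn \<Phi> P True True \<beta> \<beta>)"
proof -
  let ?W = "weyl_group \<Phi>" and ?s = "refl \<beta>"
  have s: "?s \<in> ?W"
    using \<beta> by (rule refl_in_weyl_group)
  have "\<beta> \<noteq> 0"
    using \<beta> root_system_zero[OF \<Phi>] by auto
  then have "?s \<circ> ?s = id"
    by (simp add: fun_eq_iff refl_refl)
  have "(w \<circ> ?s) \<beta> = - w \<beta>" if "w \<in> ?W" for w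
    using \<open>\<beta> \<noteq> 0\<close> linear_weyl_group[OF that] by (simp add: refl_self linear_neg)
  then have "Wsgn \<Phi> P False False \<beta> \<beta> = {w \<in> ?W. w \<circ> ?s \<in> Wsgn \<Phi> P True True \<beta> \<beta>}"
    using weyl_group_comp[OF _ s] by (auto simp: Wsgn_def)
  also have "card \<dots> = card (Wsgn \<Phi> P True True \<beta> \<beta>)"
    using \<open>?s \<circ> ?s = id\<close> weyl_group_comp[OF _ s] by (intro card_right_translate) (auto simp: Wsgn_def)
  finally show ?thesis .
qed

lemma dihedral_card_relations:
  fixes n :: "bool \<Rightarrow> bool \<Rightarrow> nat"
  assumes "0 < N" and "2 \<le> m" and m2: "m = 2 \<longleftrightarrow> t = 0"
    and counts: "\<And>e f. 2 * m * n e f = N * expected_count m t e f"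
  shows "n True True = n False False" and "n True False = n False True"
    and "0 \<le> t \<Longrightarrow> n True True = (m - 1) * n True False"
    and "t \<le> 0 \<Longrightarrow> n True False = (m - 1) * n True True"
    and "n False False = n True False \<longleftrightarrow> t = 0"
proof -
  have scale: "n e f = k * n e' f'"
    if "expected_count m t e f = k * expected_count m t e' f'" for e f e' f' k
  proof -
    have "2 * m * n e f = 2 * m * (k * n e' f')"
      using counts[of e f] counts[of e' f'] that by (simp add: algebra_simps)
    then show ?thesis
      using \<open>2 \<le> m\<close> by simp
  qed
  show "n True True = n False False"
    using scale[of True True 1 False False] by (simp add: expected_count_def)
  show "n True False = n False True"
    using scale[of True False 1 False True] by (simp add: expected_count_def)
  show "n True True = (m - 1) * n True False" if "0 \<le> t"
    using that m2 by (intro scale) (auto simp: expected_count_def)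
  show "n True False = (m - 1) * n True True" if "t \<le> 0"
    using that m2 by (intro scale) (auto simp: expected_count_def)
  show "n False False = n True False \<longleftrightarrow> t = 0"
  proof
    assume "t = 0"
    then show "n False False = n True False"
      using scale[of False False 1 True False] by (simp add: expected_count_def)
  next
    assume "n False False = n True False"
    then have "N * expected_count m t False False = N * expected_count m t True False"
      using counts[of False False] counts[of True False] by metis
    then show "t = 0"
      using \<open>0 < N\<close> \<open>2 \<le> m\<close> m2 by (auto simp: expected_count_def split: if_splits)
  qed
qed

theorem proposition3p5:
  fixes \<Phi> P :: "'a::euclidean_space set" and \<beta> \<gamma> :: 'a
  assumes "root_system \<Phi>" and "positive_system \<Phi> P"
    and "\<beta> \<in> P" and "\<gamma> \<in> P"
  shows "card (Wsgn \<Phi> P True True \<beta> \<gamma>) = card (Wsgn \<Phi> P False False \<beta> \<gamma>)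
    \<and> card (Wsgn \<Phi> P True False \<beta> \<gamma>) = card (Wsgn \<Phi> P False True \<beta> \<gamma>)
    \<and> (\<beta> \<noteq> \<gamma> \<longrightarrow>
         (\<beta> \<bullet> \<gamma> \<ge> 0 \<longrightarrow> card (Wsgn \<Phi> P True True \<beta> \<gamma>)
                          = (ord_refl \<beta> \<gamma> - 1) * card (Wsgn \<Phi> P True False \<beta> \<gamma>))
       \<and> (\<beta> \<bullet> \<gamma> \<le> 0 \<longrightarrow> card (Wsgn \<Phi> P True False \<beta> \<gamma>)
                          = (ord_refl \<beta> \<gamma> - 1) * card (Wsgn \<Phi> P True True \<beta> \<gamma>)))
    \<and> ((card (Wsgn \<Phi> P True True \<beta> \<gamma>) = card (Wsgn \<Phi> P False False \<beta> \<gamma>)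
         \<and> card (Wsgn \<Phi> P False False \<beta> \<gamma>) = card (Wsgn \<Phi> P True False \<beta> \<gamma>)
         \<and> card (Wsgn \<Phi> P True False \<beta> \<gamma>) = card (Wsgn \<Phi> P False True \<beta> \<gamma>))
       \<longleftrightarrow> \<beta> \<bullet> \<gamma> = 0)"
proof -
  obtain v where regular: "\<forall>\<alpha> \<in> \<Phi>. \<alpha> \<bullet> v \<noteq> 0" and P: "P = {\<alpha> \<in> \<Phi>. 0 < \<alpha> \<bullet> v}"
    using assms(2) unfolding positive_system_def by blast
  have \<beta>: "\<beta> \<in> \<Phi>" "0 < \<beta> \<bullet> v" and \<gamma>: "\<gamma> \<in> \<Phi>" "0 < \<gamma> \<bullet> v"
    using assms(3,4) P by auto
  let ?n = "\<lambda>e f. card (Wsgn \<Phi> P e f \<beta> \<gamma>)"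
  show ?thesis
  proof (cases "\<beta> = \<gamma>")
    case True
    have "id \<in> Wsgn \<Phi> P True True \<beta> \<gamma>"
      using assms(3,4) weyl_group.weyl_id by (simp add: Wsgn_def)
    moreover have "finite (Wsgn \<Phi> P True True \<beta> \<gamma>)"
      using finite_weyl_group[OF assms(1)] by (rule rev_finite_subset) (auto simp: Wsgn_def)
    ultimately have "?n True True \<noteq> 0"
      by (auto simp: card_0_eq)
    moreover have "Wsgn \<Phi> P True False \<beta> \<gamma> = {}" and "Wsgn \<Phi> P False True \<beta> \<gamma> = {}"
      using True by (auto simp: Wsgn_def P)
    ultimately show ?thesis
      using True card_Wsgn_diagonal[OF assms(1) \<beta>(1)] \<beta>(1) root_system_zero[OF assms(1)] by auto
  next
    case False
    have "\<beta> \<noteq> - \<gamma>"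
      using \<beta>(2) \<gamma>(2) by auto
    have "0 < card (weyl_group \<Phi>)"
      using finite_weyl_group[OF assms(1)] weyl_group.weyl_id by (auto simp: card_gt_0_iff)
    from dihedral_card_relations[OF this card_Wsgn_root_pair[OF assms(1) P regular \<beta>(1) \<gamma>(1) False \<open>\<beta> \<noteq> - \<gamma>\<close>]]
    show ?thesis
      by auto
  qed
qed

end
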